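(* For all integers $n\ge0$ and $k\ge0$, $$\mu(N|_{2n},k,J^{*})\equiv\begin{cases}0\pmod 2,&\text{if }k\text{ is odd},\\ \mu(P|_n,k/2,J^{*})\pmod 2,&\text{if }k\text{ is even}.\end{cases}$$
   Context: Let $N=\{0,1,2,\ldots\}$, $J^{*}=\{(2n+1)2^{2k}-1 : n,k\in N,\ k>0\}=\{3,11,15,19,\ldots\}$, and $P=\{k\in N: k\equiv0,3\pmod 4\}$. For an infinite set $A\subseteq N$, $A|_m$ denotes the set of the $m$ smallest elements of $A$. An involution on a finite set $A$ is a permutation $\sigma$ of $A$ with $\sigma=\sigma^{-1}$; its cycles are fixed points and transpositions $(c,d)$. A transposition $(c,d)$ is said to be in a set $B$ if $c+d\in B$. For a finite set $A\subseteq N$, an integer $k\ge0$ and a set $B\subseteq N$, $\mu(A,k,B)$ denotes the number of involutions of $A$ having exactly $k$ transpositions, all of which are in $B$. *)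

theory Defs
  imports Main "HOL-Combinatorics.Permutations"
begin

definition Jstar :: "nat set" where
  "Jstar = {(2*n+1) * 2^(2*k) - 1 | n k. k > 0}"

definition Pset :: "nat set" where
  "Pset = {k. k mod 4 = 0 \<or> k mod 4 = 3}"

text \<open>A|_m: the set of the m smallest elements of A (A infinite).\<close>
definition restr_smallest :: "nat set \<Rightarrow> nat \<Rightarrow> nat set" where
  "restr_smallest A m = {x \<in> A. card {y \<in> A. y < x} < m}"

definition transps :: "(nat \<Rightarrow> nat) \<Rightarrow> nat set \<Rightarrow> nat set set" where
  "transps \<sigma> A = {{c, \<sigma> c} | c. c \<in> A \<and> \<sigma> c \<noteq> c}"

definition mu :: "nat set \<Rightarrow> nat \<Rightarrow> nat set \<Rightarrow> nat" where
  "mu A k B = card {\<sigma>. \<sigma> permutes A \<and> \<sigma> \<circ> \<sigma> = id \<and> card (transps \<sigma> A) = k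
                      \<and> (\<forall>c\<in>A. \<sigma> c \<noteq> c \<longrightarrow> c + \<sigma> c \<in> B)}"

end

theory Submission
  imports Defs
begin

(*
  The map partner, which swaps 2j and 2j+1, satisfies partner c + partner d = c + d whenever
  c + d is odd, and every element of Jstar is 3 mod 4.  Hence conjugation by partner is an
  involution on the involutions counted by mu(N|_2n, k, Jstar), and their number is congruent
  mod 2 to the number of those commuting with partner.  Since a transposition (c, d) in Jstar
  has c + d = 3 mod 4, such an involution never swaps 2j with 2j+1, so it comes from an
  involution rho of {0..n-1}: each transposition (j, m) of rho yields the two transpositions
  (2j, 2m+1) and (2j+1, 2m), both with sum 2(j+m)+1.  So k must be even, and the count becomes
  that of involutions of {0..n-1} with k/2 transpositions whose sums lie in {m. 2m+1 in Jstar}.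
  Finally j |-> 2j + j mod 2 enumerates P increasingly and turns the condition j + m in
  {m. 2m+1 in Jstar} into (2j + j mod 2) + (2m + m mod 2) in Jstar.
*)

definition involutions_on :: "nat set \<Rightarrow> nat set \<Rightarrow> (nat \<Rightarrow> nat) set" where
  "involutions_on A B =
     {\<sigma>. \<sigma> \<circ> \<sigma> = id \<and> (\<forall>x. x \<notin> A \<longrightarrow> \<sigma> x = x) \<and> (\<forall>c\<in>A. \<sigma> c \<noteq> c \<longrightarrow> c + \<sigma> c \<in> B)}"

definition moved :: "(nat \<Rightarrow> nat) \<Rightarrow> nat set \<Rightarrow> nat set" where
  "moved \<sigma> A = {c \<in> A. \<sigma> c \<noteq> c}"

lemma involutions_onD:
  assumes "\<sigma> \<in> involutions_on A B"
  shows involutions_on_involutive: "\<sigma> (\<sigma> x) = x"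
    and involutions_on_outside: "x \<notin> A \<Longrightarrow> \<sigma> x = x"
    and involutions_on_closed: "c \<in> A \<Longrightarrow> \<sigma> c \<in> A"
    and involutions_on_sum: "c \<in> A \<Longrightarrow> \<sigma> c \<noteq> c \<Longrightarrow> c + \<sigma> c \<in> B"
  using assms by (auto simp: involutions_on_def pointfree_idE)

lemma involutions_onI:
  assumes "\<And>x. \<sigma> (\<sigma> x) = x" "\<And>x. x \<notin> A \<Longrightarrow> \<sigma> x = x"
    and "\<And>c. c \<in> A \<Longrightarrow> \<sigma> c \<noteq> c \<Longrightarrow> c + \<sigma> c \<in> B"
  shows "\<sigma> \<in> involutions_on A B"
  using assms by (auto simp: involutions_on_def)

lemma card_eq_twice_card_pairs:
  assumes "finite M" "\<And>x. x \<in> M \<Longrightarrow> g x \<in> M \<and> g x \<noteq> x \<and> g (g x) = x"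
  shows "card M = 2 * card ((\<lambda>x. {x, g x}) ` M)"
proof -
  let ?P = "(\<lambda>x. {x, g x}) ` M"
  have U: "\<Union>?P = M" using assms(2) by auto
  have pair_eq: "{x, g x} = {z, g z}" if "z \<in> {x, g x}" "g (g x) = x" for x z
    using that by auto
  have "2 * card ?P = card (\<Union>?P)"
  proof (rule card_partition)
    show "finite ?P" "finite (\<Union>?P)" using assms(1) U by simp_all
    show "card c = 2" if c: "c \<in> ?P" for c
    proof -
      obtain x where "c = {x, g x}" "x \<in> M" using c by blast
      moreover have "g x \<noteq> x" using assms(2) \<open>x \<in> M\<close> by blast
      ultimately show ?thesis by simp
    qed
    show "c1 \<inter> c2 = {}" if c12: "c1 \<in> ?P" "c2 \<in> ?P" "c1 \<noteq> c2" for c1 c2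
    proof (rule ccontr)
      assume "c1 \<inter> c2 \<noteq> {}"
      then obtain z where "z \<in> c1" "z \<in> c2" by blast
      moreover obtain x y where "c1 = {x, g x}" "c2 = {y, g y}" "x \<in> M" "y \<in> M"
        using c12(1,2) by blast
      ultimately have "c1 = {z, g z}" "c2 = {z, g z}"
        using pair_eq assms(2) by blast+
      then show False using c12(3) by simp
    qed
  qed
  then show ?thesis using U by simp
qed

lemma card_mod_2_eq_card_fixpoints_mod_2:
  assumes "finite S" "\<And>x. x \<in> S \<Longrightarrow> \<Phi> x \<in> S \<and> \<Phi> (\<Phi> x) = x"
  shows "card S mod 2 = card {x \<in> S. \<Phi> x = x} mod 2"
proof -
  let ?M = "{x \<in> S. \<Phi> x \<noteq> x}"
  have "card ?M = 2 * card ((\<lambda>x. {x, \<Phi> x}) ` ?M)"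
    by (rule card_eq_twice_card_pairs) (use assms in auto)
  moreover have "{x \<in> S. \<Phi> x = x} = S \<inter> {x. \<Phi> x = x}" "?M = S - {x. \<Phi> x = x}"
    by auto
  then have "card S = card {x \<in> S. \<Phi> x = x} + card ?M"
    using card_Int_Diff[OF assms(1)] by simp
  ultimately show ?thesis by simp
qed

lemma card_moved_eq_twice_card_transps:
  assumes "finite A" "\<sigma> \<in> involutions_on A B"
  shows "card (moved \<sigma> A) = 2 * card (transps \<sigma> A)"
proof -
  have "transps \<sigma> A = (\<lambda>x. {x, \<sigma> x}) ` moved \<sigma> A"
    unfolding transps_def moved_def by auto
  moreover have "card (moved \<sigma> A) = 2 * card ((\<lambda>x. {x, \<sigma> x}) ` moved \<sigma> A)"
    by (rule card_eq_twice_card_pairs)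
       (use assms involutions_onD[OF assms(2)] in \<open>auto simp: moved_def\<close>)
  ultimately show ?thesis by simp
qed

lemma even_card_moved: "finite A \<Longrightarrow> \<sigma> \<in> involutions_on A B \<Longrightarrow> even (card (moved \<sigma> A))"
  by (simp add: card_moved_eq_twice_card_transps)

lemma involutions_on_permutes: "\<sigma> \<in> involutions_on A B \<Longrightarrow> \<sigma> permutes A"
  unfolding permutes_def by (metis involutions_on_involutive involutions_on_outside)

lemma involutions_on_eq:
  "involutions_on A B = {\<sigma>. \<sigma> permutes A \<and> \<sigma> \<circ> \<sigma> = id \<and> (\<forall>c\<in>A. \<sigma> c \<noteq> c \<longrightarrow> c + \<sigma> c \<in> B)}"
proof (intro set_eqI iffI)
  fix \<sigma> assume "\<sigma> \<in> involutions_on A B"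
  then show "\<sigma> \<in> {\<sigma>. \<sigma> permutes A \<and> \<sigma> \<circ> \<sigma> = id \<and> (\<forall>c\<in>A. \<sigma> c \<noteq> c \<longrightarrow> c + \<sigma> c \<in> B)}"
    using involutions_on_permutes by (simp add: involutions_on_def)
qed (auto simp: involutions_on_def permutes_not_in)

lemma mu_eq_card_involutions_on:
  assumes "finite A"
  shows "mu A k B = card {\<sigma> \<in> involutions_on A B. card (moved \<sigma> A) = 2 * k}"
proof -
  have "mu A k B = card {\<sigma> \<in> involutions_on A B. card (transps \<sigma> A) = k}"
    unfolding mu_def involutions_on_eq by (simp add: conj_ac)
  also have "{\<sigma> \<in> involutions_on A B. card (transps \<sigma> A) = k}
      = {\<sigma> \<in> involutions_on A B. card (moved \<sigma> A) = 2 * k}"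
    using card_moved_eq_twice_card_transps[OF assms] by auto
  finally show ?thesis .
qed

lemma finite_involutions_on: "finite A \<Longrightarrow> finite (involutions_on A B)"
  by (rule finite_subset[OF _ finite_permutations[of A]]) (auto intro: involutions_on_permutes)

definition inverse_maps_on :: "nat set \<Rightarrow> nat set \<Rightarrow> (nat \<Rightarrow> nat) \<Rightarrow> (nat \<Rightarrow> nat) \<Rightarrow> bool" where
  "inverse_maps_on A A' f g \<longleftrightarrow>
     (\<forall>x\<in>A. f x \<in> A' \<and> g (f x) = x) \<and> (\<forall>y\<in>A'. g y \<in> A \<and> f (g y) = y)"

lemma inverse_maps_on_sym: "inverse_maps_on A A' f g \<Longrightarrow> inverse_maps_on A' A g f"
  unfolding inverse_maps_on_def by blast

definition conj_on :: "nat set \<Rightarrow> (nat \<Rightarrow> nat) \<Rightarrow> (nat \<Rightarrow> nat) \<Rightarrow> (nat \<Rightarrow> nat) \<Rightarrow> nat \<Rightarrow> nat" where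
  "conj_on A' f g \<sigma> y = (if y \<in> A' then f (\<sigma> (g y)) else y)"

lemma
  assumes fg: "inverse_maps_on A A' f g"
    and sum: "\<And>c d. c \<in> A \<Longrightarrow> d \<in> A \<Longrightarrow> c + d \<in> B \<Longrightarrow> f c + f d \<in> B'"
    and \<sigma>: "\<sigma> \<in> involutions_on A B"
  shows conj_on_mem: "conj_on A' f g \<sigma> \<in> involutions_on A' B'"
    and card_moved_conj_on: "card (moved (conj_on A' f g \<sigma>) A') = card (moved \<sigma> A)"
proof -
  note fg' = fg[unfolded inverse_maps_on_def]
  note \<sigma>D = involutions_onD[OF \<sigma>]
  show "conj_on A' f g \<sigma> \<in> involutions_on A' B'"
  proof (rule involutions_onI)
    fix y assume y: "y \<in> A'" "conj_on A' f g \<sigma> y \<noteq> y"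
    then have "\<sigma> (g y) \<noteq> g y" using fg' by (auto simp: conj_on_def)
    then have "f (g y) + f (\<sigma> (g y)) \<in> B'"
      using y fg' \<sigma>D by (intro sum) auto
    then show "y + conj_on A' f g \<sigma> y \<in> B'" using y fg' by (simp add: conj_on_def)
  qed (use fg' \<sigma>D in \<open>auto simp: conj_on_def\<close>)
  have "moved (conj_on A' f g \<sigma>) A' = f ` moved \<sigma> A"
  proof (intro set_eqI iffI)
    fix y assume "y \<in> moved (conj_on A' f g \<sigma>) A'"
    then have y: "y \<in> A'" "f (\<sigma> (g y)) \<noteq> y" by (auto simp: moved_def conj_on_def)
    then have "g y \<in> moved \<sigma> A" using fg' by (auto simp: moved_def)
    then show "y \<in> f ` moved \<sigma> A" using y fg' by (metis image_eqI)
  next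
    fix y assume "y \<in> f ` moved \<sigma> A"
    then obtain x where x: "x \<in> A" "\<sigma> x \<noteq> x" "y = f x" by (auto simp: moved_def)
    then have "f (\<sigma> x) \<noteq> f x" using fg' involutions_on_closed[OF \<sigma>] by metis
    then show "y \<in> moved (conj_on A' f g \<sigma>) A'" using x fg' by (simp add: moved_def conj_on_def)
  qed
  moreover have "inj_on f (moved \<sigma> A)"
    using fg' by (intro inj_on_inverseI[where g = g]) (auto simp: moved_def)
  ultimately show "card (moved (conj_on A' f g \<sigma>) A') = card (moved \<sigma> A)"
    by (simp add: card_image)
qed

lemma conj_on_conj_on:
  assumes "inverse_maps_on A A' f g" "\<sigma> \<in> involutions_on A B"
  shows "conj_on A g f (conj_on A' f g \<sigma>) = \<sigma>"
  using assms involutions_onD[OF assms(2)]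
  by (auto simp: fun_eq_iff conj_on_def inverse_maps_on_def)

lemma mu_eq_mu_inverse_maps_on:
  assumes fg: "inverse_maps_on A A' f g" and "finite A"
    and sum: "\<And>c d. c \<in> A \<Longrightarrow> d \<in> A \<Longrightarrow> c + d \<in> B \<longleftrightarrow> f c + f d \<in> B'"
  shows "mu A k B = mu A' k B'"
proof -
  have gf: "inverse_maps_on A' A g f" using fg by (rule inverse_maps_on_sym)
  have "A' = f ` A" using fg unfolding inverse_maps_on_def by force
  then have "finite A'" using \<open>finite A\<close> by simp
  have sum': "g c + g d \<in> B" if "c \<in> A'" "d \<in> A'" "c + d \<in> B'" for c d
    using that sum[of "g c" "g d"] fg by (auto simp: inverse_maps_on_def)
  have sum_fwd: "f c + f d \<in> B'" if "c \<in> A" "d \<in> A" "c + d \<in> B" for c d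
    using that sum by blast
  let ?S = "\<lambda>A B. {\<sigma> \<in> involutions_on A B. card (moved \<sigma> A) = 2 * k}"
  have "bij_betw (conj_on A' f g) (?S A B) (?S A' B')"
  proof (rule bij_betw_byWitness[where f' = "conj_on A g f"])
    show "conj_on A' f g ` ?S A B \<subseteq> ?S A' B'"
      using conj_on_mem[OF fg sum_fwd] card_moved_conj_on[OF fg sum_fwd] by auto
    show "conj_on A g f ` ?S A' B' \<subseteq> ?S A B"
      using conj_on_mem[OF gf sum'] card_moved_conj_on[OF gf sum'] by auto
  qed (use conj_on_conj_on[OF fg] conj_on_conj_on[OF gf] in auto)
  then show ?thesis
    using \<open>finite A\<close> \<open>finite A'\<close> by (simp add: mu_eq_card_involutions_on bij_betw_same_card)
qed

definition partner :: "nat \<Rightarrow> nat" where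
  "partner x = (if even x then x + 1 else x - 1)"

lemma partner_div_2 [simp]: "partner x div 2 = x div 2"
  by (cases "even x") (auto simp: partner_def elim!: evenE oddE)

lemma even_partner_iff [simp]: "even (partner x) \<longleftrightarrow> odd x"
  by (cases "even x") (auto simp: partner_def elim!: evenE oddE)

lemma partner_partner [simp]: "partner (partner x) = x"
  by (cases "even x") (auto simp: partner_def elim!: evenE oddE)

lemma partner_less_double_iff: "partner x < 2 * n \<longleftrightarrow> x < 2 * n"
  by (cases "even x") (auto simp: partner_def elim!: evenE oddE)

lemma partner_add_partner: "odd (c + d) \<Longrightarrow> partner c + partner d = c + d"
  by (cases "even c") (auto simp: partner_def elim!: evenE oddE)

lemma inverse_maps_on_partner: "inverse_maps_on {..<2 * n} {..<2 * n} partner partner"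
  by (simp add: inverse_maps_on_def partner_less_double_iff)

lemma less_double_iff_div_2_less: "x < 2 * n \<longleftrightarrow> x div 2 < (n::nat)"
  by auto

definition half_odd :: "nat set \<Rightarrow> nat set" where
  "half_odd B = {m. 2 * m + 1 \<in> B}"

(* A transposition (j, m) of \<rho> becomes the transpositions (2j, 2m+1) and (2j+1, 2m). *)
definition lift :: "(nat \<Rightarrow> nat) \<Rightarrow> nat \<Rightarrow> nat" where
  "lift \<rho> x = (if \<rho> (x div 2) = x div 2 then x else 2 * \<rho> (x div 2) + (if even x then 1 else 0))"

lemma lift_div_2 [simp]: "lift \<rho> x div 2 = \<rho> (x div 2)"
  by (simp add: lift_def)

lemma lift_eq_self_iff: "lift \<rho> x = x \<longleftrightarrow> \<rho> (x div 2) = x div 2"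
  by (metis lift_def lift_div_2)

lemma even_lift_iff: "even (lift \<rho> x) \<longleftrightarrow> (even x \<longleftrightarrow> \<rho> (x div 2) = x div 2)"
  by (simp add: lift_def)

lemma nat_eq_iff_div_2_even: "a = b \<longleftrightarrow> a div 2 = b div 2 \<and> (even a \<longleftrightarrow> even (b::nat))"
  by (metis div_mult_mod_eq even_iff_mod_2_eq_zero odd_iff_mod_2_eq_one)

lemma lift_lift:
  assumes "\<And>j. \<rho> (\<rho> j) = j"
  shows "lift \<rho> (lift \<rho> x) = x"
  by (subst nat_eq_iff_div_2_even) (auto simp: assms even_lift_iff lift_eq_self_iff)

lemma lift_mem_involutions_on_iff:
  "lift \<rho> \<in> involutions_on {..<2 * n} B \<longleftrightarrow> \<rho> \<in> involutions_on {..<n} (half_odd B)"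
proof
  assume \<sigma>: "lift \<rho> \<in> involutions_on {..<2 * n} B"
  have \<rho>: "\<rho> j = lift \<rho> (2 * j) div 2" for j by simp
  show "\<rho> \<in> involutions_on {..<n} (half_odd B)"
  proof (rule involutions_onI)
    show "\<rho> (\<rho> j) = j" for j
    proof -
      have "\<rho> (\<rho> j) = lift \<rho> (lift \<rho> (2 * j)) div 2" by simp
      also have "\<dots> = j" using involutions_on_involutive[OF \<sigma>] by simp
      finally show ?thesis .
    qed
    show "\<rho> j = j" if "j \<notin> {..<n}" for j
      using that \<rho>[of j] involutions_on_outside[OF \<sigma>, of "2 * j"] by simp
    fix j assume j: "j \<in> {..<n}" "\<rho> j \<noteq> j"
    then have "lift \<rho> (2 * j) = 2 * \<rho> j + 1" by (simp add: lift_def)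
    moreover have "2 * j + lift \<rho> (2 * j) \<in> B"
      using j involutions_on_sum[OF \<sigma>, of "2 * j"] by (simp add: lift_eq_self_iff)
    ultimately show "j + \<rho> j \<in> half_odd B" by (simp add: half_odd_def algebra_simps)
  qed
next
  assume \<rho>: "\<rho> \<in> involutions_on {..<n} (half_odd B)"
  show "lift \<rho> \<in> involutions_on {..<2 * n} B"
  proof (rule involutions_onI)
    show "lift \<rho> (lift \<rho> x) = x" for x
      by (rule lift_lift) (rule involutions_on_involutive[OF \<rho>])
    show "lift \<rho> x = x" if "x \<notin> {..<2 * n}" for x
      using that involutions_on_outside[OF \<rho>, of "x div 2"] by (simp add: lift_eq_self_iff)
    fix x assume x: "x \<in> {..<2 * n}" "lift \<rho> x \<noteq> x"
    then have moved: "\<rho> (x div 2) \<noteq> x div 2" by (simp add: lift_eq_self_iff)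
    then have "x div 2 + \<rho> (x div 2) \<in> half_odd B"
      using x involutions_on_sum[OF \<rho>, of "x div 2"] by simp
    moreover have "x + lift \<rho> x = 2 * (x div 2 + \<rho> (x div 2)) + 1"
      using moved by (cases "even x") (auto simp: lift_def elim!: evenE oddE)
    ultimately show "x + lift \<rho> x \<in> B" by (simp add: half_odd_def)
  qed
qed

lemma conj_on_partner_lift:
  assumes "\<rho> \<in> involutions_on {..<n} C"
  shows "conj_on {..<2 * n} partner partner (lift \<rho>) = lift \<rho>"
proof
  fix x
  have "partner (lift \<rho> (partner x)) = lift \<rho> x"
    by (subst nat_eq_iff_div_2_even) (auto simp: even_lift_iff)
  then show "conj_on {..<2 * n} partner partner (lift \<rho>) x = lift \<rho> x"
    using involutions_on_outside[OF assms, of "x div 2"]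
    by (auto simp: conj_on_def lift_def less_double_iff_div_2_less)
qed

lemma card_vimage_div_2:
  assumes "finite M"
  shows "card ((\<lambda>x::nat. x div 2) -` M) = 2 * card M"
proof -
  have "(\<lambda>x. x div 2) -` M = (\<lambda>j. 2 * j) ` M \<union> (\<lambda>j. 2 * j + 1) ` M"
  proof (intro set_eqI iffI)
    fix x assume "x \<in> (\<lambda>x. x div 2) -` M"
    moreover have "x = 2 * (x div 2) \<or> x = 2 * (x div 2) + 1" by presburger
    ultimately show "x \<in> (\<lambda>j. 2 * j) ` M \<union> (\<lambda>j. 2 * j + 1) ` M" by blast
  qed auto
  moreover have "(\<lambda>j. 2 * j) ` M \<inter> (\<lambda>j. 2 * j + 1) ` M = {}" by auto presburger
  ultimately show ?thesis
    using assms by (simp add: card_Un_disjoint card_image inj_on_def)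
qed

lemma card_moved_lift: "card (moved (lift \<rho>) {..<2 * n}) = 2 * card (moved \<rho> {..<n})"
proof -
  have "moved (lift \<rho>) {..<2 * n} = (\<lambda>x. x div 2) -` moved \<rho> {..<n}"
    by (auto simp: moved_def lift_eq_self_iff less_double_iff_div_2_less)
  moreover have "finite (moved \<rho> {..<n})" by (simp add: moved_def)
  ultimately show ?thesis by (simp add: card_vimage_div_2)
qed

lemma conj_on_partner_fixpoint_eq_lift:
  assumes B: "\<forall>m\<in>B. m mod 4 = 3" and \<sigma>: "\<sigma> \<in> involutions_on {..<2 * n} B"
    and fixed: "conj_on {..<2 * n} partner partner \<sigma> = \<sigma>"
  shows "lift (\<lambda>j. \<sigma> (2 * j) div 2) = \<sigma>"
proof
  define \<rho> where "\<rho> j = \<sigma> (2 * j) div 2" for j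
  have comm: "\<sigma> (partner x) = partner (\<sigma> x)" for x
  proof (cases "x < 2 * n")
    case True
    then have "partner (\<sigma> (partner x)) = \<sigma> x"
      using fun_cong[OF fixed, of x] by (simp add: conj_on_def)
    then show ?thesis by (metis partner_partner)
  next
    case False
    then show ?thesis using involutions_on_outside[OF \<sigma>] partner_less_double_iff by simp
  qed
  have moved_even: "odd (\<sigma> (2 * j)) \<and> \<sigma> (2 * j) div 2 \<noteq> j" if "\<sigma> (2 * j) \<noteq> 2 * j" for j
  proof -
    have "2 * j < 2 * n" using that involutions_on_outside[OF \<sigma>, of "2 * j"] by auto
    then have "(2 * j + \<sigma> (2 * j)) mod 4 = 3" using B involutions_on_sum[OF \<sigma>] that by auto
    then show ?thesis by presburger
  qed
  then have fixed_iff: "\<sigma> (2 * j) = 2 * j \<longleftrightarrow> \<rho> j = j"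
    and even_iff: "even (\<sigma> (2 * j)) \<longleftrightarrow> \<sigma> (2 * j) = 2 * j" for j
    by (auto simp: \<rho>_def)
  fix x
  have \<sigma>_div: "\<sigma> (2 * j) div 2 = \<rho> j" for j by (simp add: \<rho>_def)
  have "x = 2 * (x div 2) \<or> x = partner (2 * (x div 2))"
    by (cases "even x") (auto simp: partner_def elim!: evenE oddE)
  then obtain j where "x = 2 * j \<or> x = partner (2 * j)" by blast
  then show "lift \<rho> x = \<sigma> x"
  proof
    assume x: "x = 2 * j"
    show ?thesis unfolding x
      by (subst nat_eq_iff_div_2_even) (simp add: \<sigma>_div even_lift_iff fixed_iff even_iff)
  next
    assume x: "x = partner (2 * j)"
    show ?thesis unfolding x
      by (subst nat_eq_iff_div_2_even) (simp add: comm \<sigma>_div even_lift_iff fixed_iff even_iff)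
  qed
qed

lemma mu_double_mod_2:
  assumes B: "\<forall>m\<in>B. m mod 4 = 3"
  shows "mu {..<2 * n} k B mod 2
           = card {\<rho> \<in> involutions_on {..<n} (half_odd B). card (moved \<rho> {..<n}) = k} mod 2"
proof -
  let ?A = "{..<2 * n}"
  let ?\<Phi> = "conj_on ?A partner partner"
  let ?S = "{\<sigma> \<in> involutions_on ?A B. card (moved \<sigma> ?A) = 2 * k}"
  let ?R = "{\<rho> \<in> involutions_on {..<n} (half_odd B). card (moved \<rho> {..<n}) = k}"
  have partner_sum: "partner c + partner d \<in> B" if "c + d \<in> B" for c d
  proof -
    have "(c + d) mod 4 = 3" using B that by blast
    then have "odd (c + d)" by presburger
    then show ?thesis using that by (simp add: partner_add_partner)
  qed
  have \<Phi>: "?\<Phi> \<sigma> \<in> ?S \<and> ?\<Phi> (?\<Phi> \<sigma>) = \<sigma>" if "\<sigma> \<in> ?S" for \<sigma>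
    using that conj_on_mem[OF inverse_maps_on_partner partner_sum]
      card_moved_conj_on[OF inverse_maps_on_partner partner_sum]
      conj_on_conj_on[OF inverse_maps_on_partner]
    by auto
  have "{\<sigma> \<in> ?S. ?\<Phi> \<sigma> = \<sigma>} = lift ` ?R"
  proof (intro set_eqI iffI)
    fix \<sigma> assume "\<sigma> \<in> {\<sigma> \<in> ?S. ?\<Phi> \<sigma> = \<sigma>}"
    then have \<sigma>: "\<sigma> \<in> involutions_on ?A B" "card (moved \<sigma> ?A) = 2 * k" "?\<Phi> \<sigma> = \<sigma>" by auto
    define \<rho> where "\<rho> j = \<sigma> (2 * j) div 2" for j
    have "lift \<rho> = \<sigma>" unfolding \<rho>_def by (rule conj_on_partner_fixpoint_eq_lift[OF B \<sigma>(1,3)])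
    moreover have "\<rho> \<in> ?R"
      using \<sigma>(1,2) card_moved_lift[of \<rho> n] lift_mem_involutions_on_iff[of \<rho> n B]
      unfolding \<open>lift \<rho> = \<sigma>\<close> by simp
    ultimately show "\<sigma> \<in> lift ` ?R" by blast
  next
    fix \<sigma> assume "\<sigma> \<in> lift ` ?R"
    then obtain \<rho> where "\<rho> \<in> ?R" "\<sigma> = lift \<rho>" by blast
    then show "\<sigma> \<in> {\<sigma> \<in> ?S. ?\<Phi> \<sigma> = \<sigma>}"
      using conj_on_partner_lift[of \<rho> n "half_odd B"]
      by (simp add: lift_mem_involutions_on_iff card_moved_lift)
  qed
  moreover have "inj lift"
  proof (rule injI)
    fix \<rho> \<rho>' assume "lift \<rho> = lift \<rho>'"
    then have "lift \<rho> (2 * j) div 2 = lift \<rho>' (2 * j) div 2" for j by simp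
    then show "\<rho> = \<rho>'" by auto
  qed
  ultimately have "card {\<sigma> \<in> ?S. ?\<Phi> \<sigma> = \<sigma>} = card ?R"
    by (simp add: card_image inj_on_subset)
  moreover have "card ?S mod 2 = card {\<sigma> \<in> ?S. ?\<Phi> \<sigma> = \<sigma>} mod 2"
    using finite_involutions_on[of ?A B] \<Phi> by (intro card_mod_2_eq_card_fixpoints_mod_2) auto
  ultimately show ?thesis by (simp add: mu_eq_card_involutions_on)
qed

definition enum_P :: "nat \<Rightarrow> nat" where
  "enum_P j = 2 * j + j mod 2"

lemma enum_P_div_2 [simp]: "enum_P j div 2 = j"
  unfolding enum_P_def by simp

lemma strict_mono_enum_P: "strict_mono enum_P"
proof (rule strict_monoI)
  fix i j :: nat assume "i < j"
  moreover have "i mod 2 \<le> 1" by simp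
  ultimately show "enum_P i < enum_P j" unfolding enum_P_def by linarith
qed

lemma range_enum_P: "range enum_P = Pset"
proof -
  have Pset_iff: "x \<in> Pset \<longleftrightarrow> enum_P (x div 2) = x" for x
  proof -
    have "(x mod 4 = 0 \<or> x mod 4 = 3) \<longleftrightarrow> 2 * (x div 2) + x div 2 mod 2 = x"
      by presburger
    then show ?thesis by (simp add: Pset_def enum_P_def)
  qed
  show ?thesis
  proof (intro set_eqI iffI)
    fix x assume "x \<in> range enum_P"
    then obtain j where "x = enum_P j" by blast
    then show "x \<in> Pset" by (simp add: Pset_iff)
  next
    fix x assume "x \<in> Pset"
    then have "enum_P (x div 2) = x" by (simp add: Pset_iff)
    then show "x \<in> range enum_P" by (metis rangeI)
  qed
qed

lemma add_mem_half_odd_iff_enum_P: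
  assumes B: "\<forall>m\<in>B. m mod 4 = 3"
  shows "c + d \<in> half_odd B \<longleftrightarrow> enum_P c + enum_P d \<in> B"
proof (cases "c mod 2 = d mod 2")
  case True
  then have "(2 * (c + d) + 1) mod 4 = 1" "even (enum_P c + enum_P d)"
    unfolding enum_P_def by presburger+
  moreover have "odd m" if "m \<in> B" for m
  proof -
    have "m mod 4 = 3" using B that by blast
    then show ?thesis by presburger
  qed
  ultimately have "c + d \<notin> half_odd B" "enum_P c + enum_P d \<notin> B"
    using B by (force simp: half_odd_def)+
  then show ?thesis by blast
next
  case False
  then have "enum_P c + enum_P d = 2 * (c + d) + 1" unfolding enum_P_def by presburger
  then show ?thesis by (simp add: half_odd_def)
qed

lemma inverse_maps_on_enum_P: "inverse_maps_on {..<n} (enum_P ` {..<n}) enum_P (\<lambda>y. y div 2)"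
  by (auto simp: inverse_maps_on_def)

lemma restr_smallest_range:
  assumes "strict_mono (f :: nat \<Rightarrow> nat)"
  shows "restr_smallest (range f) m = f ` {..<m}"
proof -
  have "{y \<in> range f. y < f j} = f ` {..<j}" for j
    using strict_mono_less[OF assms] by auto
  then have "card {y \<in> range f. y < f j} = j" for j
    using strict_mono_imp_inj_on[OF assms] by (simp add: card_image)
  then show ?thesis unfolding restr_smallest_def by auto
qed

lemma restr_smallest_UNIV: "restr_smallest UNIV m = {..<m}"
  using restr_smallest_range[OF strict_mono_on_id] by simp

lemma Jstar_mod_4: "m \<in> Jstar \<Longrightarrow> m mod 4 = 3"
proof -
  assume "m \<in> Jstar"
  then obtain a k where m: "m = (2 * a + 1) * 2 ^ (2 * k) - 1" and "k > 0"
    unfolding Jstar_def by blast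
  then obtain j where "k = Suc j" using gr0_implies_Suc by blast
  then have "(2 :: nat) ^ (2 * k) = 4 * 4 ^ j" by (simp add: power_mult)
  moreover obtain t where "(2 * a + 1) * (4 :: nat) ^ j = Suc t"
    using gr0_implies_Suc by force
  ultimately have "m = 4 * t + 3" using m by (simp add: algebra_simps)
  then show ?thesis by simp
qed

theorem lemma2p3:
  fixes n k :: nat
  shows "(odd k \<longrightarrow> mu (restr_smallest UNIV (2*n)) k Jstar mod 2 = 0) \<and>
         (even k \<longrightarrow> mu (restr_smallest UNIV (2*n)) k Jstar mod 2
                      = mu (restr_smallest Pset n) (k div 2) Jstar mod 2)"
proof -
  have B: "\<forall>m\<in>Jstar. m mod 4 = 3" using Jstar_mod_4 by blast
  let ?R = "{\<rho> \<in> involutions_on {..<n} (half_odd Jstar). card (moved \<rho> {..<n}) = k}"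
  have mu_N: "mu (restr_smallest UNIV (2 * n)) k Jstar mod 2 = card ?R mod 2"
    using mu_double_mod_2[OF B] by (simp add: restr_smallest_UNIV)
  show ?thesis
  proof (intro conjI impI)
    assume "odd k"
    then have "?R = {}" by (auto dest: even_card_moved[OF finite_lessThan])
    then show "mu (restr_smallest UNIV (2 * n)) k Jstar mod 2 = 0"
      using mu_N by (simp only: card.empty mod_0)
  next
    assume "even k"
    then have "card ?R = mu {..<n} (k div 2) (half_odd Jstar)"
      by (simp add: mu_eq_card_involutions_on)
    also have "\<dots> = mu (enum_P ` {..<n}) (k div 2) Jstar"
      by (rule mu_eq_mu_inverse_maps_on[OF inverse_maps_on_enum_P])
         (simp_all add: add_mem_half_odd_iff_enum_P[OF B])
    also have "enum_P ` {..<n} = restr_smallest Pset n"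
      using restr_smallest_range[OF strict_mono_enum_P] by (simp add: range_enum_P)
    finally show "mu (restr_smallest UNIV (2 * n)) k Jstar mod 2
                    = mu (restr_smallest Pset n) (k div 2) Jstar mod 2"
      using mu_N by simp
  qed
qed

end
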